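(* Let $L$ be a positive integer and let $\Lambda$ be a subgroup of $\mathbb{Z}_L^2$. Then there exist unique integers $a,b$ with $a\mid L$, $b\mid L$, and a unique integer $s$ with $0\le s<b$ and $s\in\frac{ab}{\gcd(ab,L)}\mathbb{Z}$, such that $$\Lambda = A\mathbb{Z}_L^2=\begin{pmatrix} a & 0\\ s & b\end{pmatrix}\mathbb{Z}_L^2 .$$
   Context: $\mathbb{Z}_L=\mathbb{Z}/L\mathbb{Z}$. For an integer matrix $A$, $A\mathbb{Z}_L^2=\{Az \bmod L : z\in\mathbb{Z}_L^2\}$ denotes the image of $\mathbb{Z}_L^2$ under multiplication by $A$ with arithmetic modulo $L$. *)

theory Defs
  imports "HOL-Algebra.Group"
begin

definition ZL2 :: "int \<Rightarrow> (int \<times> int) monoid" where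
  "ZL2 L = \<lparr> carrier = {0..<L} \<times> {0..<L},
             mult = (\<lambda>p q. ((fst p + fst q) mod L, (snd p + snd q) mod L)),
             one = (0, 0) \<rparr>"

definition mat_image :: "int \<Rightarrow> int \<Rightarrow> int \<Rightarrow> int \<Rightarrow> (int \<times> int) set" where
  "mat_image L a s b =
     {((a * x) mod L, (s * x + b * y) mod L) | x y. x \<in> {0..<L} \<and> y \<in> {0..<L}}"

end

theory Submission
  imports Defs
begin

text \<open>The preimage M of \<Lambda> in \<int> \<times> \<int> is a subgroup containing L(\<int> \<times> \<int>), so it is in Hermite
  normal form: with a > 0 generating the projection of M to the first coordinate, b > 0
  generating its intersection with the second axis, and (a, s) \<in> M with 0 \<le> s < b,
  M = {(u, v). a dvd u \<and> b dvd v - s (u div a)}, and this description determines a, s and b.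
  The image of [[a,0],[s,b]] modulo L has exactly this preimage when a and b divide L and
  b divides s L/a, which is the condition ab/gcd(ab, L) dvd s.\<close>

definition hermite_lattice :: "int \<Rightarrow> int \<Rightarrow> int \<Rightarrow> (int \<times> int) set" where
  "hermite_lattice a s b = {(u, v). a dvd u \<and> b dvd v - s * (u div a)}"

definition residue_preimage :: "int \<Rightarrow> (int \<times> int) set \<Rightarrow> (int \<times> int) set" where
  "residue_preimage L \<Lambda> = {(u, v). (u mod L, v mod L) \<in> \<Lambda>}"

lemma mult_div_gcd_dvd_iff:
  fixes a b L s :: int
  assumes "a > 0" "b > 0" "a dvd L"
  shows "(a * b) div gcd (a * b) L dvd s \<longleftrightarrow> b dvd s * (L div a)"
proof -
  obtain c where c: "L = a * c" using assms(3) by blast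
  define g where "g = gcd b c"
  have "g > 0" using assms(2) g_def by simp
  obtain b' c' where b': "b = g * b'" and c': "c = g * c'"
    unfolding g_def by (meson gcd_dvd1 gcd_dvd2 dvdE)
  have "b div g = b'" "c div g = c'" using b' c' \<open>g > 0\<close> by simp_all
  then have "coprime b' c'"
    using div_gcd_coprime[of b c] assms(2) unfolding g_def by simp
  have "gcd (a * b) L = a * g"
    using gcd_mult_distrib_int[of a b c] assms(1) unfolding c g_def by simp
  then have "(a * b) div gcd (a * b) L = b'"
    using assms(1) b' \<open>g > 0\<close> by (simp add: mult.left_commute)
  moreover have "b dvd s * (L div a) \<longleftrightarrow> b' dvd s * c'"
    using assms(1) b' c' c \<open>g > 0\<close> by (simp add: mult.left_commute)
  ultimately show ?thesis
    using coprime_dvd_mult_left_iff[OF \<open>coprime b' c'\<close>] by simp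
qed

lemma int_diff_closed_eq_multiples:
  fixes P :: "int \<Rightarrow> bool"
  assumes diff: "\<And>u v. P u \<Longrightarrow> P v \<Longrightarrow> P (u - v)" and "P n" "n > 0"
  shows "\<exists>d > 0. \<forall>u. P u \<longleftrightarrow> d dvd u"
proof -
  have zero: "P 0" using diff[OF \<open>P n\<close> \<open>P n\<close>] by simp
  have add: "P (u + v)" if "P u" "P v" for u v
    using diff[OF that(1) diff[OF zero that(2)]] by simp
  have nat_mult: "P (int k * u)" if "P u" for k u
  proof (induction k)
    case (Suc k)
    then show ?case using add[OF Suc that] by (simp add: distrib_right add.commute)
  qed (simp add: zero)
  have mult: "P (k * u)" if "P u" for k u
  proof (cases "k \<ge> 0")
    case True
    then show ?thesis using nat_mult[OF that, of "nat k"] by simp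
  next
    case False
    then show ?thesis using diff[OF zero nat_mult[OF that, of "nat (- k)"]] by simp
  qed
  define k where "k = (LEAST k::nat. k > 0 \<and> P (int k))"
  have "nat n > 0 \<and> P (int (nat n))" using assms by simp
  then have k: "k > 0 \<and> P (int k)"
    unfolding k_def by (rule LeastI)
  have minimal: "\<not> P (int j)" if "0 < j" "j < k" for j
    using not_less_Least[of j "\<lambda>k. k > 0 \<and> P (int k)"] that unfolding k_def by blast
  have "P u \<longleftrightarrow> int k dvd u" for u
  proof
    assume "P u"
    then have "P (u mod int k)"
      using diff[OF \<open>P u\<close> mult[of "int k" "u div int k"]] k by (simp add: minus_div_mult_eq_mod)
    moreover have "0 \<le> u mod int k" "u mod int k < int k" using k by simp_all
    ultimately have "u mod int k = 0"
      using minimal[of "nat (u mod int k)"] by (cases "u mod int k = 0") (auto simp: nat_less_iff)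
    then show "int k dvd u" by (simp add: dvd_eq_mod_eq_0)
  qed (use mult k in \<open>auto elim!: dvdE simp: mult.commute\<close>)
  then show ?thesis using k by (intro exI[of _ "int k"]) simp
qed

lemma diff_closed_eq_hermite_lattice:
  fixes M :: "(int \<times> int) set"
  assumes diff: "\<And>u v u' v'. (u, v) \<in> M \<Longrightarrow> (u', v') \<in> M \<Longrightarrow> (u - u', v - v') \<in> M"
    and "(n, w) \<in> M" "n > 0" "(0, m) \<in> M" "m > 0"
  shows "\<exists>a s b. a > 0 \<and> b > 0 \<and> 0 \<le> s \<and> s < b \<and> M = hermite_lattice a s b"
proof -
  have add: "(u + u', v + v') \<in> M" if "(u, v) \<in> M" "(u', v') \<in> M" for u v u' v'
    using diff[OF that(1) diff[OF diff[OF that(2) that(2)] that(2)]] by simp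
  have "\<exists>a > 0. \<forall>u. (\<exists>v. (u, v) \<in> M) \<longleftrightarrow> a dvd u"
    by (rule int_diff_closed_eq_multiples[of _ n]) (use diff assms(2,3) in blast)+
  then obtain a where "a > 0" and a: "\<And>u. (\<exists>v. (u, v) \<in> M) \<longleftrightarrow> a dvd u" by blast
  have "\<exists>b > 0. \<forall>v. (0, v) \<in> M \<longleftrightarrow> b dvd v"
    by (rule int_diff_closed_eq_multiples[of _ m]) (use diff[of 0 _ 0] assms(4,5) in auto)
  then obtain b where "b > 0" and b: "\<And>v. (0, v) \<in> M \<longleftrightarrow> b dvd v" by blast
  obtain v0 where "(a, v0) \<in> M" using a[of a] by auto
  define s where "s = v0 mod b"
  have "(a, s) \<in> M"
    using add[OF \<open>(a, v0) \<in> M\<close>, of 0 "- (v0 div b * b)"] b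
    by (simp add: s_def minus_div_mult_eq_mod)
  \<comment> \<open>The multiples of a single element form a difference-closed set of integers containing 1.\<close>
  have multiples: "(k * a, k * s) \<in> M" for k
  proof -
    have "\<exists>d > 0. \<forall>k. (k * a, k * s) \<in> M \<longleftrightarrow> d dvd k"
      by (rule int_diff_closed_eq_multiples[of _ 1])
        (use diff \<open>(a, s) \<in> M\<close> in \<open>auto simp: left_diff_distrib\<close>)
    then obtain d where "d > 0" and d: "\<And>k. (k * a, k * s) \<in> M \<longleftrightarrow> d dvd k" by blast
    then have "d = 1" using d[of 1] \<open>(a, s) \<in> M\<close> by (simp add: zdvd_antisym_nonneg)
    then show ?thesis using d by simp
  qed
  have "(u, v) \<in> M \<longleftrightarrow> a dvd u \<and> b dvd v - s * (u div a)" for u v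
  proof
    assume "(u, v) \<in> M"
    then have "a dvd u" using a[of u] by auto
    then show "a dvd u \<and> b dvd v - s * (u div a)"
      using diff[OF \<open>(u, v) \<in> M\<close> multiples[of "u div a"]] b by (simp add: mult.commute)
  next
    assume "a dvd u \<and> b dvd v - s * (u div a)"
    then show "(u, v) \<in> M"
      using add[OF multiples[of "u div a"], of 0 "v - s * (u div a)"] b by (simp add: mult.commute)
  qed
  then have "M = hermite_lattice a s b" unfolding hermite_lattice_def by auto
  moreover have "0 \<le> s" "s < b" using \<open>b > 0\<close> by (simp_all add: s_def)
  ultimately show ?thesis using \<open>a > 0\<close> \<open>b > 0\<close> by blast
qed

lemma hermite_lattice_unique:
  fixes a s b a' s' b' :: int
  assumes "a > 0" "b > 0" "0 \<le> s" "s < b" "a' > 0" "b' > 0" "0 \<le> s'" "s' < b'"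
    and eq: "hermite_lattice a s b = hermite_lattice a' s' b'"
  shows "a = a' \<and> s = s' \<and> b = b'"
proof -
  have mem: "a dvd u \<and> b dvd v - s * (u div a) \<longleftrightarrow> a' dvd u \<and> b' dvd v - s' * (u div a')" for u v
    using eq unfolding hermite_lattice_def by (simp add: set_eq_iff)
  have "a = a'"
    using mem[of a s] mem[of a' s'] assms by (simp add: zdvd_antisym_nonneg)
  moreover have "b = b'"
    using mem[of 0 b] mem[of 0 b'] assms by (simp add: zdvd_antisym_nonneg)
  moreover have "s mod b = s' mod b"
    using mem[of a s] \<open>a = a'\<close> \<open>b = b'\<close> assms(1) by (simp add: mod_eq_dvd_iff)
  ultimately show ?thesis using assms by simp
qed

lemma residue_preimage_mat_image:
  fixes L a s b :: int
  assumes "L > 0" "a > 0" "a dvd L" "b dvd L" "b dvd s * (L div a)"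
  shows "residue_preimage L (mat_image L a s b) = hermite_lattice a s b"
proof (intro subset_antisym subrelI)
  fix u v
  assume "(u, v) \<in> residue_preimage L (mat_image L a s b)"
  then obtain x y where u: "u mod L = a * x mod L" and v: "v mod L = (s * x + b * y) mod L"
    unfolding residue_preimage_def mat_image_def by auto
  obtain c where c: "L = a * c" using assms(3) by blast
  obtain m where m: "u = a * x + L * m"
    using u by (metis mod_eq_dvd_iff dvdE diff_eq_eq add.commute)
  obtain n where n: "v = s * x + b * y + L * n"
    using v by (metis mod_eq_dvd_iff dvdE diff_eq_eq add.commute)
  have "u div a = x + c * m" using m c assms(2) by (simp add: algebra_simps)
  then have "v - s * (u div a) = b * y + L * n - (s * c) * m"
    using n by (simp add: algebra_simps)
  moreover have "L div a = c" using c assms(2) by simp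
  ultimately have "b dvd v - s * (u div a)"
    using assms(4,5) by simp
  moreover have "a dvd u" using m c by simp
  ultimately show "(u, v) \<in> hermite_lattice a s b" unfolding hermite_lattice_def by simp
next
  fix u v
  assume "(u, v) \<in> hermite_lattice a s b"
  then have "a dvd u" "b dvd v - s * (u div a)" unfolding hermite_lattice_def by simp_all
  define k where "k = u div a"
  obtain t where "v - s * k = b * t" using \<open>b dvd v - s * (u div a)\<close> k_def by blast
  then have t: "v = s * k + b * t" by simp
  have k: "u = a * k" using \<open>a dvd u\<close> k_def by simp
  have "u mod L = a * (k mod L) mod L"
    unfolding k by (simp add: mod_mult_right_eq)
  moreover have "v mod L = (s * (k mod L) + b * (t mod L)) mod L"
    unfolding t by (metis mod_add_eq mod_mult_right_eq)
  moreover have "k mod L \<in> {0..<L}" "t mod L \<in> {0..<L}" using assms(1) by simp_all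
  ultimately show "(u, v) \<in> residue_preimage L (mat_image L a s b)"
    unfolding residue_preimage_def mat_image_def by blast
qed

lemma residue_preimage_inj:
  assumes "A \<subseteq> {0..<L} \<times> {0..<L}" "B \<subseteq> {0..<L} \<times> {0..<L}"
    and "residue_preimage L A = residue_preimage L B"
  shows "A = B"
proof -
  have "(p, q) \<in> A \<longleftrightarrow> (p, q) \<in> B" if "(p, q) \<in> {0..<L} \<times> {0..<L}" for p q
  proof -
    have "(p mod L, q mod L) \<in> A \<longleftrightarrow> (p mod L, q mod L) \<in> B"
      using assms(3) unfolding residue_preimage_def by (simp add: set_eq_iff)
    then show ?thesis using that by simp
  qed
  then show ?thesis using assms(1,2) by blast
qed

lemma residue_preimage_subgroup_diff:
  assumes "L > 0" "subgroup \<Lambda> (ZL2 L)"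
    and "(u, v) \<in> residue_preimage L \<Lambda>" "(u', v') \<in> residue_preimage L \<Lambda>"
  shows "(u - u', v - v') \<in> residue_preimage L \<Lambda>"
proof -
  let ?M = "residue_preimage L \<Lambda>"
  have add: "(u + u', v + v') \<in> ?M" if "(u, v) \<in> ?M" "(u', v') \<in> ?M" for u v u' v'
    using subgroup.m_closed[OF assms(2) that[unfolded residue_preimage_def, simplified]]
    by (simp add: ZL2_def residue_preimage_def mod_add_eq)
  have zero: "(0, 0) \<in> ?M"
    using subgroup.one_closed[OF assms(2)] by (simp add: ZL2_def residue_preimage_def)
  have nat_mult: "(int k * u, int k * v) \<in> ?M" if "(u, v) \<in> ?M" for k u v
  proof (induction k)
    case (Suc k)
    then show ?case using add[OF Suc that] by (simp add: distrib_right add.commute)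
  qed (simp add: zero)
  \<comment> \<open>Negation is the (L - 1)-fold sum, since L u \<equiv> 0 modulo L.\<close>
  have "(- u', - v') \<in> ?M"
    using nat_mult[OF assms(4), of "nat (L - 1)"] assms(1)
    by (simp add: residue_preimage_def left_diff_distrib mod_diff_left_eq[symmetric])
  from add[OF assms(3) this] show ?thesis by simp
qed

theorem proposition2p1:
  fixes L :: int and \<Lambda> :: "(int \<times> int) set"
  assumes "L > 0"
    and "subgroup \<Lambda> (ZL2 L)"
  shows "\<exists>!(a, b, s). a > 0 \<and> b > 0 \<and> a dvd L \<and> b dvd L \<and> 0 \<le> s \<and> s < b \<and>
            ((a * b) div gcd (a * b) L) dvd s \<and> \<Lambda> = mat_image L a s b"
proof -
  let ?M = "residue_preimage L \<Lambda>"
  have box: "\<Lambda> \<subseteq> {0..<L} \<times> {0..<L}" "mat_image L a s b \<subseteq> {0..<L} \<times> {0..<L}" for a s b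
    using subgroup.subset[OF assms(2)] assms(1) by (auto simp: ZL2_def mat_image_def)
  have "(L, 0) \<in> ?M" "(0, L) \<in> ?M"
    using subgroup.one_closed[OF assms(2)] by (simp_all add: ZL2_def residue_preimage_def)
  then obtain a s b where "a > 0" "b > 0" "0 \<le> s" "s < b" and M: "?M = hermite_lattice a s b"
    using diff_closed_eq_hermite_lattice[of ?M] residue_preimage_subgroup_diff[OF assms] assms(1)
    by blast
  then have "a dvd L" "b dvd L" "b dvd s * (L div a)"
    using \<open>(L, 0) \<in> ?M\<close> \<open>(0, L) \<in> ?M\<close> by (auto simp: hermite_lattice_def)
  have matches: "\<Lambda> = mat_image L a' s' b' \<longleftrightarrow> hermite_lattice a s b = hermite_lattice a' s' b'"
    if "a' > 0" "a' dvd L" "b' dvd L" "b' dvd s' * (L div a')" for a' s' b'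
    using residue_preimage_inj[OF box] residue_preimage_mat_image[OF assms(1) that] M by metis
  show ?thesis
  proof (rule ex1I[of _ "(a, b, s)"], goal_cases)
    case 1
    show ?case
      using matches \<open>a > 0\<close> \<open>b > 0\<close> \<open>0 \<le> s\<close> \<open>s < b\<close> \<open>a dvd L\<close> \<open>b dvd L\<close> \<open>b dvd s * (L div a)\<close>
        mult_div_gcd_dvd_iff by simp
  next
    case (2 y)
    then obtain a' b' s' where y: "y = (a', b', s')" "a' > 0" "b' > 0" "a' dvd L" "b' dvd L"
      "0 \<le> s'" "s' < b'" "b' dvd s' * (L div a')" "\<Lambda> = mat_image L a' s' b'"
      using mult_div_gcd_dvd_iff by (cases y) auto
    then show ?case
      using matches hermite_lattice_unique \<open>a > 0\<close> \<open>b > 0\<close> \<open>0 \<le> s\<close> \<open>s < b\<close> by metis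
  qed
qed

end
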